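(* If $n\ge 0$ is an integer such that $\deg_t\bigl(B_{n+1}(t)-B_n(t)\bigr)=1$, then $n=1$, and $B_2(t)-B_1(t)=t-1$.
   Context: The Stern polynomials $B_n(t)\in\mathbb{Z}[t]$, $n\ge 0$, are defined by $B_0(t)=0$, $B_1(t)=1$, $B_{2n}(t)=tB_n(t)$ and $B_{2n+1}(t)=B_n(t)+B_{n+1}(t)$ for $n\ge 1$. *)

theory Defs
  imports "HOL-Computational_Algebra.Polynomial"
begin

function stern_poly :: "nat \<Rightarrow> int poly" where
  "stern_poly n =
     (if n = 0 then 0
      else if n = 1 then 1
      else if even n then [:0, 1:] * stern_poly (n div 2)
      else stern_poly (n div 2) + stern_poly (n div 2 + 1))"
  by auto
termination
  by (relation "measure id") (auto elim: oddE)

end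

theory Submission
  imports Defs
begin

(*
  Write D = B (n+1) - B n and assume deg D = 1, i.e. D = a + b t with b \<noteq> 0.
  Three evaluations of Stern polynomials, each proved by induction along the
  Stern recursion, pin D down:
    B n (2) = n        so D(2) = 1, i.e. a + 2b = 1;
    B n (0) = [n odd]  so D(0) = a = \<plusminus>1; a = 1 would force b = 0, hence n is odd,
                       a = -1, b = 1 and D = t - 1 vanishes at t = 1;
    B n (1) > 0        for n \<ge> 1 (Stern's diatomic sequence).
  For n = 2m + 1 with m \<ge> 1 the recursion gives D(1) = -B m (1) < 0, so m = 0 and
  n = 1; finally B 2 - B 1 = t - 1 is computed directly.
*)

declare stern_poly.simps [simp del]

lemma stern_poly_0 [simp]: "stern_poly 0 = 0"
  by (subst stern_poly.simps) simp

lemma stern_poly_1 [simp]: "stern_poly (Suc 0) = 1"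
  by (subst stern_poly.simps) simp

lemma stern_poly_even: "n \<ge> 1 \<Longrightarrow> stern_poly (2 * n) = [:0, 1:] * stern_poly n"
  by (subst stern_poly.simps) simp

lemma stern_poly_odd:
  "n \<ge> 1 \<Longrightarrow> stern_poly (2 * n + 1) = stern_poly n + stern_poly (n + 1)"
  by (subst stern_poly.simps) simp

lemma stern_induct [case_names zero one even odd]:
  fixes P :: "nat \<Rightarrow> bool" and n :: nat
  assumes zero: "P 0" and one: "P 1"
    and even: "\<And>n. n \<ge> 1 \<Longrightarrow> P n \<Longrightarrow> P (2 * n)"
    and odd: "\<And>n. n \<ge> 1 \<Longrightarrow> P n \<Longrightarrow> P (n + 1) \<Longrightarrow> P (2 * n + 1)"
  shows "P n"
proof (induction n rule: less_induct)
  case (less n)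
  consider "n = 0" | "n = 1" | m where "m \<ge> 1" "n = 2 * m"
    | m where "m \<ge> 1" "n = 2 * m + 1"
    by (metis evenE oddE One_nat_def less_one mult_0_right add_0 not_less)
  then show ?case
  proof cases
    case (3 m)
    then show ?thesis using even less by simp
  next
    case (4 m)
    then show ?thesis using odd less[of m] less[of "m + 1"] by simp
  qed (use zero one in auto)
qed

lemma stern_poly_at_2: "poly (stern_poly n) 2 = int n"
proof (induction n rule: stern_induct)
  case (even n)
  then show ?case by (simp add: stern_poly_even)
next
  case (odd n)
  then show ?case unfolding stern_poly_odd[OF odd(1)] by simp
qed simp_all

lemma stern_poly_at_0: "poly (stern_poly n) 0 = (if odd n then 1 else 0)"
proof (induction n rule: stern_induct)
  case (even n)
  then show ?case by (simp add: stern_poly_even)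
next
  case (odd n)
  then show ?case unfolding stern_poly_odd[OF odd(1)] by simp
qed simp_all

lemma stern_poly_at_1_pos: "n \<ge> 1 \<Longrightarrow> poly (stern_poly n) 1 > 0"
proof (induction n rule: stern_induct)
  case (even n)
  then show ?case by (simp add: stern_poly_even)
next
  case (odd n)
  then show ?case unfolding stern_poly_odd[OF odd(1)] by simp
qed simp_all

lemma poly_degree_le_1_eq:
  fixes p :: "'a :: zero poly"
  assumes "degree p \<le> 1"
  shows "p = [:coeff p 0, coeff p 1:]"
proof (rule poly_eqI)
  fix i
  show "coeff p i = coeff [:coeff p 0, coeff p 1:] i"
    using assms by (cases i) (auto simp: coeff_pCons coeff_eq_0 split: nat.splits)
qed

text \<open>Consecutive differences of odd index 2m + 1 \<ge> 3 are negative at t = 1, since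
  there B (2m+2) - B (2m+1) evaluates to -B m (1).\<close>

lemma stern_diff_odd_at_1_neg:
  assumes "m \<ge> 1"
  shows "poly (stern_poly (2 * m + 2) - stern_poly (2 * m + 1)) 1 < 0"
proof -
  have "stern_poly (2 * m + 2) = [:0, 1:] * stern_poly (m + 1)"
    using stern_poly_even[of "m + 1"] by (simp add: algebra_simps)
  then have "poly (stern_poly (2 * m + 2) - stern_poly (2 * m + 1)) 1
      = - poly (stern_poly m) 1"
    using stern_poly_odd[OF assms] by simp
  then show ?thesis
    using stern_poly_at_1_pos[OF assms] by simp
qed

theorem theorem5p4:
  fixes n :: nat
  assumes "degree (stern_poly (n + 1) - stern_poly n) = 1"
  shows "n = 1 \<and> stern_poly 2 - stern_poly 1 = [:-1, 1:]"
proof -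
  define D where "D = stern_poly (n + 1) - stern_poly n"
  have D_linear: "D = [:coeff D 0, coeff D 1:]"
    using assms by (intro poly_degree_le_1_eq) (simp add: D_def)
  have lead: "coeff D 1 \<noteq> 0"
    using assms by (metis D_def leading_coeff_0_iff degree_0 zero_neq_one)
  have at_2: "coeff D 0 + 2 * coeff D 1 = 1"
  proof -
    have "poly D 2 = 1"
      by (simp add: D_def stern_poly_at_2)
    then show ?thesis
      by (subst (asm) D_linear) simp
  qed
  have at_0: "coeff D 0 = (if odd n then -1 else 1)"
  proof -
    have "poly D 0 = (if odd n then -1 else 1)"
      by (simp add: D_def stern_poly_at_0)
    then show ?thesis
      by (subst (asm) D_linear) simp
  qed
  then have "odd n" and "coeff D 1 = 1"
    using at_2 lead by (auto split: if_splits)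
  then have "poly D 1 = 0"
    using at_0 by (subst D_linear) simp
  obtain m where m: "n = 2 * m + 1"
    using \<open>odd n\<close> oddE by blast
  have "m = 0"
  proof (rule ccontr)
    assume "m \<noteq> 0"
    then have "poly D 1 < 0"
      using stern_diff_odd_at_1_neg[of m] by (simp add: D_def m add.commute)
    then show False
      using \<open>poly D 1 = 0\<close> by simp
  qed
  moreover have "stern_poly 2 = [:0, 1:]"
    using stern_poly_even[of 1] by simp
  ultimately show ?thesis
    using m by (simp add: one_pCons)
qed

end
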